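(* Let $M(C,\bar\xi,\pi)$ be a Myller configuration with Darboux frame $(\bar\xi,\bar\mu,\bar v)$ and invariants $G,K,T$, with $(T(s),K(s))\neq(0,0)$ for all $s$. Define $$\sigma_v=\frac{K^{2}\left(\frac{T}{K}\right)'+(T^{2}+K^{2})G}{(T^{2}+K^{2})^{3/2}},$$ where $K^2\left(\frac{T}{K}\right)'$ stands for $T'K-TK'$. Then $C$ is a $\bar v$-helix in $M$ if and only if $\sigma_v$ is constant; in that case the constant angle $\omega$ between $\bar v$ and the axis satisfies $\cot\omega=\mp\sigma_v$ (for an appropriate sign).
   Context: Let $C$ be a smooth curve in $E^3$ parametrized by arclength $s$; primes denote $d/ds$. A Myller configuration $M(C,\bar\xi,\pi)$ consists of a smooth unit vector field $\bar\xi$ along $C$ and a smooth oriented plane field $\pi$ with $\bar\xi\in\pi$; $\bar v$ is the unit normal of $\pi$, $\bar\mu=\bar v\times\bar\xi$, and the Darboux frame satisfies $\bar\xi'=G\bar\mu+K\bar v$, $\bar\mu'=-G\bar\xi+T\bar v$, $\bar v'=-K\bar\xi-T\bar\mu$. $C$ is a $\bar v$-helix in $M$ if there are a constant unit vector $\bar d_v$ and a constant $\omega$ with $\langle\bar v,\bar d_v\rangle=\cos\omega$ along $C$. *)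

theory Defs
  imports "HOL-Analysis.Analysis"
begin

text \<open>Myller configuration along a curve C over the parameter set I (arclength s):
  unit field xi, unit normal v of the plane field, mu = v x xi, and the Darboux
  frame equations with invariants G, K, T.\<close>
definition myller_config ::
  "real set \<Rightarrow> (real \<Rightarrow> real^3) \<Rightarrow> (real \<Rightarrow> real^3) \<Rightarrow> (real \<Rightarrow> real^3) \<Rightarrow> (real \<Rightarrow> real^3)
   \<Rightarrow> (real \<Rightarrow> real) \<Rightarrow> (real \<Rightarrow> real) \<Rightarrow> (real \<Rightarrow> real) \<Rightarrow> bool" where
  "myller_config I C xi mu v G K T \<longleftrightarrow>
     (\<forall>s\<in>I.
        (\<exists>C'. (C has_vector_derivative C') (at s) \<and> norm C' = 1) \<and>
        norm (xi s) = 1 \<and> norm (v s) = 1 \<and> xi s \<bullet> v s = 0 \<and>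
        mu s = cross3 (v s) (xi s) \<and>
        (xi has_vector_derivative (G s *\<^sub>R mu s + K s *\<^sub>R v s)) (at s) \<and>
        (mu has_vector_derivative (- G s *\<^sub>R xi s + T s *\<^sub>R v s)) (at s) \<and>
        (v has_vector_derivative (- K s *\<^sub>R xi s - T s *\<^sub>R mu s)) (at s))"

definition v_helix_with :: "real set \<Rightarrow> (real \<Rightarrow> real^3) \<Rightarrow> real^3 \<Rightarrow> real \<Rightarrow> bool" where
  "v_helix_with I v d \<omega> \<longleftrightarrow> norm d = 1 \<and> (\<forall>s\<in>I. v s \<bullet> d = cos \<omega>)"

definition v_helix :: "real set \<Rightarrow> (real \<Rightarrow> real^3) \<Rightarrow> bool" where
  "v_helix I v \<longleftrightarrow> (\<exists>d \<omega>. v_helix_with I v d \<omega>)"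

definition sigma_v :: "(real \<Rightarrow> real) \<Rightarrow> (real \<Rightarrow> real) \<Rightarrow> (real \<Rightarrow> real) \<Rightarrow> real \<Rightarrow> real" where
  "sigma_v G K T s =
     (deriv T s * K s - T s * deriv K s + ((T s)^2 + (K s)^2) * G s)
       / ((T s)^2 + (K s)^2) powr (3/2)"

end

theory Submission
  imports Defs
begin

text \<open>Put \<open>r = \<surd>(T\<^sup>2 + K\<^sup>2)\<close> and \<open>u = (T \<xi> - K \<mu>) / r\<close>, the unit vector of \<open>\<pi>\<close> orthogonal to
  \<open>v' = -(K \<xi> + T \<mu>)\<close>. A direct computation gives \<open>u' = \<sigma>\<^sub>v (K \<xi> + T \<mu>)\<close>.

  If \<open>\<langle>v, d\<rangle> = cos \<omega>\<close> is constant, then \<open>d \<bottom> v'\<close>, so \<open>d\<close> lies in the plane of \<open>v\<close> and \<open>u\<close>; hence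
  \<open>\<langle>u, d\<rangle>\<^sup>2 = sin\<^sup>2 \<omega>\<close>, and \<open>\<langle>u, d\<rangle>\<close> is constant because its derivative is \<open>\<sigma>\<^sub>v \<langle>K \<xi> + T \<mu>, d\<rangle> = 0\<close>.
  Differentiating \<open>\<langle>K \<xi> + T \<mu>, d\<rangle> = 0\<close> once more yields \<open>cos \<omega> = \<langle>u, d\<rangle> \<sigma>\<^sub>v\<close>, so
  \<open>cot \<omega> = \<plusminus>\<sigma>\<^sub>v\<close>. Conversely, if \<open>\<sigma>\<^sub>v = c\<close> is constant, then \<open>c v + u\<close> has derivative zero, and
  \<open>d = (c v + u) / \<surd>(1 + c\<^sup>2)\<close> is a fixed unit axis with \<open>\<langle>v, d\<rangle> = c / \<surd>(1 + c\<^sup>2)\<close>.\<close>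

lemma cross_cross_left: "cross3 (cross3 a b) c = (a \<bullet> c) *\<^sub>R b - (b \<bullet> c) *\<^sub>R a"
  using exhaust_3 by (force simp add: cross3_simps)

lemma orthonormal_cross3:
  fixes x y :: "real^3"
  assumes "norm x = 1" "norm y = 1" "x \<bullet> y = 0"
  shows "norm (cross3 x y) = 1" "x \<bullet> cross3 x y = 0" "y \<bullet> cross3 x y = 0"
proof -
  have "(norm (cross3 x y))\<^sup>2 = 1"
    using norm_cross_dot[of x y] assms by simp
  then show "norm (cross3 x y) = 1"
    using norm_ge_zero[of "cross3 x y"] by (auto simp add: power2_eq_1_iff)
  show "x \<bullet> cross3 x y = 0" "y \<bullet> cross3 x y = 0"
    by (simp_all add: dot_cross_self inner_commute)
qed

lemma sum_power2_inner_orthonormal_cross3: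
  fixes x y d :: "real^3"
  assumes "norm x = 1" "norm y = 1" "x \<bullet> y = 0"
  shows "(d \<bullet> x)\<^sup>2 + (d \<bullet> y)\<^sup>2 + (d \<bullet> cross3 x y)\<^sup>2 = (norm d)\<^sup>2"
proof -
  define z where "z = cross3 x y"
  have unit: "x \<bullet> x = 1" "y \<bullet> y = 1" "z \<bullet> z = 1" and orth: "x \<bullet> z = 0" "y \<bullet> z = 0"
    using assms orthonormal_cross3[OF assms] by (simp_all add: z_def norm_eq_1)
  define e where "e = d - ((d \<bullet> x) *\<^sub>R x + (d \<bullet> y) *\<^sub>R y + (d \<bullet> z) *\<^sub>R z)"
  have e_orth: "x \<bullet> e = 0" "y \<bullet> e = 0" "z \<bullet> e = 0"
    using unit orth assms(3) unfolding e_def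
    by (simp_all add: inner_diff_right inner_add_right inner_commute)
  then have "cross3 z e = 0"
    by (simp add: z_def cross_cross_left)
  then have "e = 0"
    using norm_cross_dot[of z e] e_orth unit by (auto simp add: dot_square_norm)
  then have "d = (d \<bullet> x) *\<^sub>R x + (d \<bullet> y) *\<^sub>R y + (d \<bullet> z) *\<^sub>R z"
    by (simp add: e_def)
  then have "d \<bullet> d = (d \<bullet> x)\<^sup>2 + (d \<bullet> y)\<^sup>2 + (d \<bullet> z)\<^sup>2"
    by (metis (no_types, lifting) inner_add_right inner_scaleR_right power2_eq_square)
  then show ?thesis
    by (simp add: z_def power2_norm_eq_inner)
qed

lemma has_real_derivative_inner_const:
  assumes "(f has_vector_derivative f') (at s)"
  shows "((\<lambda>t. f t \<bullet> d) has_real_derivative f' \<bullet> d) (at s)"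
  using bounded_linear.has_vector_derivative[OF bounded_linear_inner_left assms, of d]
  by (simp add: has_real_derivative_iff_has_vector_derivative)

lemma derivative_eq_0_if_constant_on_open:
  assumes "(f has_real_derivative f') (at s)" "open S" "s \<in> S" "\<And>t. t \<in> S \<Longrightarrow> f t = c"
  shows "f' = 0"
proof -
  have "(f has_real_derivative 0) (at s)"
    by (rule has_field_derivative_transform_within_open[OF DERIV_const assms(2,3)])
      (simp add: assms(4))
  then show ?thesis
    using DERIV_unique[OF assms(1)] by blast
qed

lemma powr_three_halves:
  assumes "0 < x"
  shows "x powr (3/2) = sqrt x ^ 3"
proof -
  have "sqrt x ^ 3 = (x powr (1/2)) powr 3"
    using assms by (simp add: powr_half_sqrt powr_realpow)
  then show ?thesis
    by (simp add: powr_powr)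
qed

lemma has_real_derivative_div_sqrt_sum_squares:
  fixes f g :: "real \<Rightarrow> real"
  assumes "(f has_real_derivative f') (at s)" "(g has_real_derivative g') (at s)"
    and "(f s, g s) \<noteq> (0, 0)"
  shows "((\<lambda>t. f t / sqrt ((f t)\<^sup>2 + (g t)\<^sup>2)) has_real_derivative
           g s * (f' * g s - f s * g') / sqrt ((f s)\<^sup>2 + (g s)\<^sup>2) ^ 3) (at s)"
proof -
  define r where "r = sqrt ((f s)\<^sup>2 + (g s)\<^sup>2)"
  have pos: "(f s)\<^sup>2 + (g s)\<^sup>2 > 0"
    using assms(3) by (simp add: sum_power2_gt_zero_iff)
  then have r: "r > 0" "r\<^sup>2 = (f s)\<^sup>2 + (g s)\<^sup>2"
    by (simp_all add: r_def)
  have "((\<lambda>t. (f t)\<^sup>2 + (g t)\<^sup>2) has_real_derivative 2 * f s * f' + 2 * g s * g') (at s)"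
    by (auto intro!: derivative_eq_intros assms(1,2))
  from DERIV_chain2[OF DERIV_real_sqrt[OF pos] this]
  have "((\<lambda>t. sqrt ((f t)\<^sup>2 + (g t)\<^sup>2)) has_real_derivative (2 * f s * f' + 2 * g s * g') / (2 * r)) (at s)"
    by (rule DERIV_cong) (use r(1) in \<open>simp add: r_def field_simps\<close>)
  from DERIV_divide[OF assms(1) this]
  have "((\<lambda>t. f t / sqrt ((f t)\<^sup>2 + (g t)\<^sup>2)) has_real_derivative
          (f' * r - f s * ((2 * f s * f' + 2 * g s * g') / (2 * r))) / (r * r)) (at s)"
    using r assms(3) by (simp add: r_def)
  moreover have "(f' * r - f s * ((2 * f s * f' + 2 * g s * g') / (2 * r))) / (r * r)
      = (f' * r\<^sup>2 - f s * (f s * f' + g s * g')) / r ^ 3"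
    using r(1) by (simp add: field_simps power2_eq_square power3_eq_cube)
  moreover have "f' * r\<^sup>2 - f s * (f s * f' + g s * g') = g s * (f' * g s - f s * g')"
    unfolding r(2) by (simp add: algebra_simps power2_eq_square)
  ultimately show ?thesis
    by (simp add: r_def)
qed

lemma inner_orthogonal_2d:
  fixes a b p q T K :: real
  assumes "K * a + T * b = 0"
  shows "(T\<^sup>2 + K\<^sup>2) * (p * a + q * b) = (a * T - b * K) * (p * T - q * K)"
proof -
  have "(T\<^sup>2 + K\<^sup>2) * (p * a + q * b) = (a * T - b * K) * (p * T - q * K) + (p * K + q * T) * (K * a + T * b)"
    by (simp add: algebra_simps power2_eq_square)
  then show ?thesis
    using assms by simp
qed

locale myller_configuration =
  fixes I :: "real set" and C xi mu v :: "real \<Rightarrow> real^3" and G K T :: "real \<Rightarrow> real"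
  assumes open_domain: "open I" and interval_domain: "is_interval I" and nonempty_domain: "I \<noteq> {}"
    and config: "myller_config I C xi mu v G K T"
    and differentiable_T_K: "\<forall>s\<in>I. T differentiable (at s) \<and> K differentiable (at s)"
    and T_K_nonzero: "\<forall>s\<in>I. (T s, K s) \<noteq> (0, 0)"
begin

lemma xi_derivative: "s \<in> I \<Longrightarrow> (xi has_vector_derivative G s *\<^sub>R mu s + K s *\<^sub>R v s) (at s)"
  and mu_derivative: "s \<in> I \<Longrightarrow> (mu has_vector_derivative - G s *\<^sub>R xi s + T s *\<^sub>R v s) (at s)"
  and v_derivative: "s \<in> I \<Longrightarrow> (v has_vector_derivative - (K s *\<^sub>R xi s + T s *\<^sub>R mu s)) (at s)"
  using config by (auto simp: myller_config_def)

lemma T_derivative: "s \<in> I \<Longrightarrow> (T has_real_derivative deriv T s) (at s)"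
  and K_derivative: "s \<in> I \<Longrightarrow> (K has_real_derivative deriv K s) (at s)"
  using differentiable_T_K by (simp_all add: DERIV_deriv_iff_real_differentiable)

lemma frame_unit:
  assumes "s \<in> I"
  shows "norm (v s) = 1" "norm (xi s) = 1" "v s \<bullet> xi s = 0" "mu s = cross3 (v s) (xi s)"
  using config assms by (auto simp: myller_config_def inner_commute)

lemma frame_orthonormal:
  assumes "s \<in> I"
  shows "xi s \<bullet> xi s = 1" "mu s \<bullet> mu s = 1" "v s \<bullet> v s = 1"
    "xi s \<bullet> mu s = 0" "mu s \<bullet> xi s = 0" "xi s \<bullet> v s = 0" "v s \<bullet> xi s = 0"
    "mu s \<bullet> v s = 0" "v s \<bullet> mu s = 0"
  using frame_unit[OF assms] orthonormal_cross3[OF frame_unit(1-3)[OF assms]]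
  by (simp_all add: norm_eq_1 inner_commute)

lemma sum_power2_inner_frame:
  assumes "s \<in> I"
  shows "(d \<bullet> xi s)\<^sup>2 + (d \<bullet> mu s)\<^sup>2 + (d \<bullet> v s)\<^sup>2 = (norm d)\<^sup>2"
  using sum_power2_inner_orthonormal_cross3[OF frame_unit(1-3)[OF assms], of d] frame_unit(4)[OF assms]
  by simp

definition r :: "real \<Rightarrow> real" where
  "r s = sqrt ((T s)\<^sup>2 + (K s)\<^sup>2)"

lemma r_pos: "s \<in> I \<Longrightarrow> r s > 0"
  and r_power2: "(r s)\<^sup>2 = (T s)\<^sup>2 + (K s)\<^sup>2"
  using T_K_nonzero by (auto simp: r_def sum_power2_gt_zero_iff)

lemma sigma_v_eq:
  assumes "s \<in> I"
  shows "sigma_v G K T s = (deriv T s * K s - T s * deriv K s) / r s ^ 3 + G s / r s"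
proof -
  have "sigma_v G K T s = (deriv T s * K s - T s * deriv K s + (r s)\<^sup>2 * G s) / ((r s)\<^sup>2) powr (3/2)"
    by (simp add: sigma_v_def r_power2)
  also have "((r s)\<^sup>2) powr (3/2) = r s ^ 3"
    using r_pos[OF assms] by (simp add: powr_three_halves)
  finally show ?thesis
    using r_pos[OF assms] by (simp add: field_simps power2_eq_square power3_eq_cube)
qed

definition u :: "real \<Rightarrow> real^3" where
  "u s = (T s / r s) *\<^sub>R xi s - (K s / r s) *\<^sub>R mu s"

lemma u_orthonormal:
  assumes "s \<in> I"
  shows "u s \<bullet> u s = 1" "v s \<bullet> u s = 0"
proof -
  have "u s \<bullet> u s = ((T s)\<^sup>2 + (K s)\<^sup>2) / (r s)\<^sup>2"
    using frame_orthonormal[OF assms]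
    by (simp add: u_def inner_diff_left inner_diff_right power2_eq_square add_divide_distrib)
  then show "u s \<bullet> u s = 1"
    using r_pos[OF assms] by (simp add: r_power2[symmetric])
  show "v s \<bullet> u s = 0"
    using frame_orthonormal[OF assms] by (simp add: u_def inner_diff_right)
qed

lemma inner_u_times_r: "s \<in> I \<Longrightarrow> (u s \<bullet> d) * r s = T s * (xi s \<bullet> d) - K s * (mu s \<bullet> d)"
  using r_pos[of s] by (simp add: u_def inner_diff_left field_simps)

lemma u_derivative:
  assumes "s \<in> I"
  shows "(u has_vector_derivative sigma_v G K T s *\<^sub>R (K s *\<^sub>R xi s + T s *\<^sub>R mu s)) (at s)"
proof -
  define W where "W = deriv T s * K s - T s * deriv K s"
  have nonzero: "(T s, K s) \<noteq> (0, 0)" "(K s, T s) \<noteq> (0, 0)"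
    using T_K_nonzero assms by auto
  have T_ratio: "((\<lambda>t. T t / r t) has_real_derivative K s * W / r s ^ 3) (at s)"
    using has_real_derivative_div_sqrt_sum_squares[OF T_derivative[OF assms] K_derivative[OF assms] nonzero(1)]
    by (simp add: r_def[abs_def] W_def)
  have "r = (\<lambda>t. sqrt ((K t)\<^sup>2 + (T t)\<^sup>2))"
    by (simp add: r_def[abs_def] add.commute)
  then have K_ratio: "((\<lambda>t. K t / r t) has_real_derivative - T s * W / r s ^ 3) (at s)"
    using has_real_derivative_div_sqrt_sum_squares[OF K_derivative[OF assms] T_derivative[OF assms] nonzero(2)]
    by (simp add: W_def algebra_simps)
  have "(u has_vector_derivative
      ((T s / r s) *\<^sub>R (G s *\<^sub>R mu s + K s *\<^sub>R v s) + (K s * W / r s ^ 3) *\<^sub>R xi s)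
      - ((K s / r s) *\<^sub>R (- G s *\<^sub>R xi s + T s *\<^sub>R v s) + (- T s * W / r s ^ 3) *\<^sub>R mu s)) (at s)"
    unfolding u_def[abs_def]
    by (intro derivative_intros T_ratio K_ratio xi_derivative mu_derivative assms)
  moreover have "((T s / r s) *\<^sub>R (G s *\<^sub>R mu s + K s *\<^sub>R v s) + (K s * W / r s ^ 3) *\<^sub>R xi s)
      - ((K s / r s) *\<^sub>R (- G s *\<^sub>R xi s + T s *\<^sub>R v s) + (- T s * W / r s ^ 3) *\<^sub>R mu s)
      = sigma_v G K T s *\<^sub>R (K s *\<^sub>R xi s + T s *\<^sub>R mu s)"
    by (simp add: sigma_v_eq[OF assms] W_def algebra_simps)
      (simp add: scaleR_add_left[symmetric] add_divide_distrib[symmetric])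
  ultimately show ?thesis
    by simp
qed

lemma helix_axis_orthogonal:
  assumes "v_helix_with I v d \<omega>" "s \<in> I"
  shows "K s * (xi s \<bullet> d) + T s * (mu s \<bullet> d) = 0"
proof -
  have "((\<lambda>t. v t \<bullet> d) has_real_derivative - (K s *\<^sub>R xi s + T s *\<^sub>R mu s) \<bullet> d) (at s)"
    by (rule has_real_derivative_inner_const[OF v_derivative[OF assms(2)]])
  then have "- (K s *\<^sub>R xi s + T s *\<^sub>R mu s) \<bullet> d = 0"
    by (rule derivative_eq_0_if_constant_on_open[OF _ open_domain assms(2)])
      (use assms(1) in \<open>simp add: v_helix_with_def\<close>)
  then show ?thesis
    by (simp add: inner_diff_left)
qed

lemma helix_axis_orthogonal_derivative:
  assumes "v_helix_with I v d \<omega>" "s \<in> I"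
  shows "(deriv K s - T s * G s) * (xi s \<bullet> d) + (deriv T s + K s * G s) * (mu s \<bullet> d)
    + (r s)\<^sup>2 * cos \<omega> = 0"
proof -
  have "((\<lambda>t. (K t *\<^sub>R xi t + T t *\<^sub>R mu t) \<bullet> d) has_real_derivative
      (K s *\<^sub>R (G s *\<^sub>R mu s + K s *\<^sub>R v s) + deriv K s *\<^sub>R xi s
       + (T s *\<^sub>R (- G s *\<^sub>R xi s + T s *\<^sub>R v s) + deriv T s *\<^sub>R mu s)) \<bullet> d) (at s)"
    by (intro has_real_derivative_inner_const derivative_intros
        K_derivative T_derivative xi_derivative mu_derivative assms(2))
  then have "(K s *\<^sub>R (G s *\<^sub>R mu s + K s *\<^sub>R v s) + deriv K s *\<^sub>R xi s
       + (T s *\<^sub>R (- G s *\<^sub>R xi s + T s *\<^sub>R v s) + deriv T s *\<^sub>R mu s)) \<bullet> d = 0"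
    by (rule derivative_eq_0_if_constant_on_open[OF _ open_domain assms(2)])
      (use helix_axis_orthogonal[OF assms(1)] in \<open>simp add: inner_add_left\<close>)
  moreover have "v s \<bullet> d = cos \<omega>"
    using assms by (simp add: v_helix_with_def)
  ultimately show ?thesis
    unfolding r_power2 by (simp add: algebra_simps power2_eq_square)
qed

lemma helix_u_component_cos_sin:
  assumes "v_helix_with I v d \<omega>" "s \<in> I"
  shows "cos \<omega> = (u s \<bullet> d) * sigma_v G K T s" "(u s \<bullet> d)\<^sup>2 = (sin \<omega>)\<^sup>2"
proof -
  define a b m where "a = xi s \<bullet> d" and "b = mu s \<bullet> d" and "m = u s \<bullet> d"
  have r: "r s > 0" "(r s)\<^sup>2 = (T s)\<^sup>2 + (K s)\<^sup>2"
    using r_pos[OF assms(2)] r_power2 by simp_all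
  have orth: "K s * a + T s * b = 0"
    using helix_axis_orthogonal[OF assms] by (simp add: a_def b_def)
  have m: "a * T s - b * K s = m * r s"
    using inner_u_times_r[OF assms(2), of d] by (simp add: a_def b_def m_def algebra_simps)
  define p q where "p = deriv K s - T s * G s" and "q = deriv T s + K s * G s"
  have "p * a + q * b = - (r s)\<^sup>2 * cos \<omega>"
    using helix_axis_orthogonal_derivative[OF assms] by (simp add: p_def q_def a_def b_def)
  moreover have "sigma_v G K T s * r s ^ 3 = deriv T s * K s - T s * deriv K s + (r s)\<^sup>2 * G s"
    using r(1) by (simp add: sigma_v_eq[OF assms(2)] field_simps power2_eq_square power3_eq_cube)
  then have "p * T s - q * K s = - sigma_v G K T s * r s ^ 3"
    unfolding r(2) by (simp add: p_def q_def algebra_simps power2_eq_square)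
  ultimately have "(r s)\<^sup>2 * (- (r s)\<^sup>2 * cos \<omega>) = (m * r s) * (- sigma_v G K T s * r s ^ 3)"
    using inner_orthogonal_2d[OF orth, of p q] m r(2) by simp
  then show "cos \<omega> = m * sigma_v G K T s"
    using r(1) by (simp add: power2_eq_square power3_eq_cube)
  have "(r s)\<^sup>2 * (a\<^sup>2 + b\<^sup>2) = (a * T s - b * K s)\<^sup>2"
    unfolding r(2) using inner_orthogonal_2d[OF orth, of a b] by (simp add: power2_eq_square)
  then have "(r s)\<^sup>2 * (a\<^sup>2 + b\<^sup>2) = (r s)\<^sup>2 * m\<^sup>2"
    by (simp add: m power_mult_distrib)
  then have "m\<^sup>2 = a\<^sup>2 + b\<^sup>2"
    using r(1) by (simp add: power_mult_distrib)
  also have "\<dots> = 1 - (cos \<omega>)\<^sup>2"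
    using sum_power2_inner_frame[OF assms(2), of d] assms
    by (simp add: a_def b_def v_helix_with_def inner_commute)
  finally show "m\<^sup>2 = (sin \<omega>)\<^sup>2"
    by (simp add: sin_squared_eq)
qed

lemma helix_u_component_constant:
  assumes "v_helix_with I v d \<omega>"
  obtains m where "\<And>s. s \<in> I \<Longrightarrow> u s \<bullet> d = m"
proof -
  have "((\<lambda>t. u t \<bullet> d) has_real_derivative 0) (at s within I)" if "s \<in> I" for s
  proof -
    have "((\<lambda>t. u t \<bullet> d) has_real_derivative
        sigma_v G K T s * (K s * (xi s \<bullet> d) + T s * (mu s \<bullet> d))) (at s)"
      using has_real_derivative_inner_const[OF u_derivative[OF that], of d]
      by (simp add: inner_add_left algebra_simps)
    then show ?thesis
      using helix_axis_orthogonal[OF assms that] by (simp add: has_field_derivative_at_within)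
  qed
  from has_field_derivative_zero_constant[OF is_interval_convex[OF interval_domain] this]
  show ?thesis
    using that by auto
qed

lemma helix_cot_eq_sigma_v:
  assumes "v_helix_with I v d \<omega>"
  shows "(\<forall>s\<in>I. cot \<omega> = sigma_v G K T s) \<or> (\<forall>s\<in>I. cot \<omega> = - sigma_v G K T s)"
proof -
  obtain m where m: "\<And>s. s \<in> I \<Longrightarrow> u s \<bullet> d = m"
    using helix_u_component_constant[OF assms] by blast
  obtain s0 where "s0 \<in> I"
    using nonempty_domain by blast
  then have m_sin: "m\<^sup>2 = (sin \<omega>)\<^sup>2"
    using helix_u_component_cos_sin(2)[OF assms] m by metis
  have cos: "cos \<omega> = m * sigma_v G K T s" if "s \<in> I" for s
    using helix_u_component_cos_sin(1)[OF assms that] m[OF that] by simp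
  have "sin \<omega> \<noteq> 0"
  proof
    assume "sin \<omega> = 0"
    then have "cos \<omega> = 0"
      using m_sin cos[OF \<open>s0 \<in> I\<close>] by simp
    with \<open>sin \<omega> = 0\<close> show False
      using sin_cos_squared_add[of \<omega>] by simp
  qed
  moreover have "m = sin \<omega> \<or> m = - sin \<omega>"
    using m_sin by (simp add: power2_eq_iff)
  ultimately show ?thesis
    using cos by (auto simp: cot_def)
qed

lemma sigma_v_constant_if_helix:
  assumes "v_helix_with I v d \<omega>"
  shows "\<exists>c. \<forall>s\<in>I. sigma_v G K T s = c"
  using helix_cot_eq_sigma_v[OF assms]
proof
  assume "\<forall>s\<in>I. cot \<omega> = sigma_v G K T s"
  then show ?thesis by metis
next
  assume "\<forall>s\<in>I. cot \<omega> = - sigma_v G K T s"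
  then have "\<forall>s\<in>I. sigma_v G K T s = - cot \<omega>" by auto
  then show ?thesis by blast
qed

lemma helix_if_sigma_v_constant:
  assumes "\<forall>s\<in>I. sigma_v G K T s = c"
  shows "\<exists>d. v_helix_with I v d (arccos (c / sqrt (1 + c\<^sup>2)))"
proof -
  define k where "k = sqrt (1 + c\<^sup>2)"
  have k: "k > 0" "k\<^sup>2 = 1 + c\<^sup>2" "\<bar>c\<bar> \<le> k"
    by (simp_all add: k_def add_pos_nonneg real_le_rsqrt)
  define D where "D t = (c / k) *\<^sub>R v t + (1 / k) *\<^sub>R u t" for t
  have "(D has_vector_derivative 0) (at s within I)" if "s \<in> I" for s
  proof -
    have "(D has_vector_derivative
        ((c / k) *\<^sub>R - (K s *\<^sub>R xi s + T s *\<^sub>R mu s) + 0 *\<^sub>R v s)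
        + ((1 / k) *\<^sub>R (sigma_v G K T s *\<^sub>R (K s *\<^sub>R xi s + T s *\<^sub>R mu s)) + 0 *\<^sub>R u s)) (at s)"
      unfolding D_def[abs_def]
      by (intro has_vector_derivative_add has_vector_derivative_scaleR DERIV_const
          v_derivative u_derivative that)
    then show ?thesis
      using assms that by (simp add: has_vector_derivative_at_within algebra_simps)
  qed
  then obtain d where d: "\<And>s. s \<in> I \<Longrightarrow> D s = d"
    using has_vector_derivative_zero_constant[OF is_interval_convex[OF interval_domain]] by metis
  have v_d: "v s \<bullet> d = c / k" and d_d: "d \<bullet> d = (c / k)\<^sup>2 + (1 / k)\<^sup>2" if "s \<in> I" for s
    using frame_orthonormal[OF that] u_orthonormal[OF that] d[OF that, symmetric]
    by (simp_all add: D_def inner_add_left inner_add_right inner_commute power2_eq_square)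
  obtain s0 where "s0 \<in> I"
    using nonempty_domain by blast
  have "(c / k)\<^sup>2 + (1 / k)\<^sup>2 = (1 + c\<^sup>2) / k\<^sup>2"
    by (simp add: power_divide add_divide_distrib)
  also have "\<dots> = 1"
    using k(1) by (simp flip: k(2))
  finally have "norm d = 1"
    unfolding norm_eq_1 d_d[OF \<open>s0 \<in> I\<close>] .
  moreover have "\<bar>c / k\<bar> \<le> 1"
    using abs_div_pos[OF k(1), of c] divide_le_eq_1_pos[OF k(1), of "\<bar>c\<bar>"] k(3) by argo
  ultimately have "v_helix_with I v d (arccos (c / k))"
    using v_d by (simp add: v_helix_with_def cos_arccos_abs)
  then show ?thesis
    unfolding k_def by blast
qed

end

theorem theorem24:
  fixes I :: "real set" and C xi mu v :: "real \<Rightarrow> real^3" and G K T :: "real \<Rightarrow> real"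
  assumes "open I" and "is_interval I" and "I \<noteq> {}"
    and "myller_config I C xi mu v G K T"
    and "\<forall>s\<in>I. T differentiable (at s) \<and> K differentiable (at s)"
    and "\<forall>s\<in>I. (T s, K s) \<noteq> (0, 0)"
  shows "(v_helix I v \<longleftrightarrow> (\<exists>c. \<forall>s\<in>I. sigma_v G K T s = c))
    \<and> (\<forall>d \<omega>. v_helix_with I v d \<omega> \<longrightarrow>
          (\<forall>s\<in>I. cot \<omega> = sigma_v G K T s) \<or> (\<forall>s\<in>I. cot \<omega> = - sigma_v G K T s))"
proof -
  interpret myller_configuration I C xi mu v G K T
    using assms by unfold_locales
  show ?thesis
  proof (intro conjI iffI allI impI)
    show "\<exists>c. \<forall>s\<in>I. sigma_v G K T s = c" if "v_helix I v"
      using that sigma_v_constant_if_helix unfolding v_helix_def by blast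
    show "v_helix I v" if "\<exists>c. \<forall>s\<in>I. sigma_v G K T s = c"
      using that helix_if_sigma_v_constant unfolding v_helix_def by blast
  qed (rule helix_cot_eq_sigma_v)
qed

end
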